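(* Let $A$ be a nonempty linearly closed subset of the abstract linear space $LS^3$ which is neither a single point nor an abstract line. Then $A$ is not locally embedded in $\mathbb{C}$; that is, there is a point $x\in A$ such that no neighborhood of $x$ in $A$ admits a continuous injective map into $\mathbb{C}$.
   Context: $\mathbb{S}^3$ is the unit sphere of $\mathbb{C}^2$ (with the subspace topology). The abstract linear space $LS^3$ has point set $\mathbb{S}^3$ and abstract lines the sets $L\cap\mathbb{S}^3$ where $L$ is a complex affine line of $\mathbb{C}^2$ meeting $\mathbb{S}^3$ in more than one point (such a set is a round circle); any two distinct points of $\mathbb{S}^3$ lie on exactly one abstract line. A subset $A\subset\mathbb{S}^3$ is linearly closed if for any two distinct $x,y\in A$ the abstract line through $x$ and $y$ is contained in $A$. *)

theory Defs
  imports "HOL-Analysis.Analysis"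
begin

text \<open>C^2 is modelled as complex \<times> complex (Euclidean norm on the product).\<close>

definition S3 :: "(complex \<times> complex) set" where
  "S3 = sphere 0 1"

definition cscale :: "complex \<Rightarrow> complex \<times> complex \<Rightarrow> complex \<times> complex" where
  "cscale t v = (t * fst v, t * snd v)"

definition complex_affine_line :: "(complex \<times> complex) set \<Rightarrow> bool" where
  "complex_affine_line L \<longleftrightarrow> (\<exists>p v. v \<noteq> 0 \<and> L = {p + cscale t v | t. True})"

definition abstract_line :: "(complex \<times> complex) set \<Rightarrow> bool" where
  "abstract_line M \<longleftrightarrow> (\<exists>L. complex_affine_line L \<and> M = L \<inter> S3 \<and>
      (\<exists>x y. x \<in> M \<and> y \<in> M \<and> x \<noteq> y))"

definition abstract_line_through :: "complex \<times> complex \<Rightarrow> complex \<times> complex \<Rightarrow> (complex \<times> complex) set" where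
  "abstract_line_through x y = {x + cscale t (y - x) | t. True} \<inter> S3"

definition linearly_closed :: "(complex \<times> complex) set \<Rightarrow> bool" where
  "linearly_closed A \<longleftrightarrow> A \<subseteq> S3 \<and>
     (\<forall>x\<in>A. \<forall>y\<in>A. x \<noteq> y \<longrightarrow> abstract_line_through x y \<subseteq> A)"

end

theory Submission
  imports Defs
begin

text \<open>For x \<in> S^3 the pair x, perp x is a unitary frame of C^2, and every point of S^3 other
than x can be written (1 - 1/u) x + (w/u) perp x with u \<noteq> 0. The slope w indexes the complex
lines through x, and the abstract line of slope w consists of x and the points with
Re u = (1 + |w|^2)/2, parametrised by Im u. If A contains x and points of two different slopes
w1, w2, then lines joining points of slope w1 to a point of slope w2 reach every slope off the
real line through w1 and w2; hence A contains a topological 3-cell (w, Im u), which by invariance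
of dimension has no continuous injection into C.\<close>

definition perp :: "complex \<times> complex \<Rightarrow> complex \<times> complex" where
  "perp x = (- cnj (snd x), cnj (fst x))"

definition frame_fst :: "complex \<times> complex \<Rightarrow> complex \<times> complex \<Rightarrow> complex" where
  "frame_fst x p = cnj (fst x) * fst p + cnj (snd x) * snd p"

definition frame_snd :: "complex \<times> complex \<Rightarrow> complex \<times> complex \<Rightarrow> complex" where
  "frame_snd x p = - snd x * fst p + fst x * snd p"

definition chart :: "complex \<times> complex \<Rightarrow> complex \<Rightarrow> complex \<Rightarrow> complex \<times> complex" where
  "chart x u w = x + cscale (1/u) (cscale w (perp x) - x)"

definition chart_param :: "complex \<Rightarrow> real \<Rightarrow> complex" where
  "chart_param w h = Complex ((1 + (cmod w)^2) / 2) h"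

definition chart_cell :: "complex \<times> complex \<Rightarrow> complex \<times> real \<Rightarrow> complex \<times> complex" where
  "chart_cell x q = chart x (chart_param (fst q) (snd q)) (fst q)"

lemma mem_S3_iff: "p \<in> S3 \<longleftrightarrow> fst p * cnj (fst p) + snd p * cnj (snd p) = 1"
proof -
  obtain a b where p: "p = (a, b)" by (cases p)
  have "p \<in> S3 \<longleftrightarrow> (cmod a)^2 + (cmod b)^2 = 1"
    by (simp add: S3_def p norm_Pair)
  also have "\<dots> \<longleftrightarrow> complex_of_real ((cmod a)^2 + (cmod b)^2) = 1"
    by (metis of_real_1 of_real_eq_iff)
  finally show ?thesis by (simp only: p fst_conv snd_conv of_real_add complex_norm_square)
qed

lemma frame_reconstruct:
  assumes "x \<in> S3"
  shows "p = cscale (frame_fst x p) x + cscale (frame_snd x p) (perp x)"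
proof -
  obtain a b where x: "x = (a, b)" by (cases x)
  have n: "a * cnj a + b * cnj b = 1" using assms by (simp add: mem_S3_iff x)
  have "cscale (frame_fst x p) x + cscale (frame_snd x p) (perp x)
      = (fst p * (a * cnj a + b * cnj b), snd p * (a * cnj a + b * cnj b))"
    by (simp add: frame_fst_def frame_snd_def perp_def cscale_def x algebra_simps)
  then show ?thesis by (simp add: n)
qed

lemma frame_norm:
  assumes "x \<in> S3"
  shows "frame_fst x p * cnj (frame_fst x p) + frame_snd x p * cnj (frame_snd x p)
       = fst p * cnj (fst p) + snd p * cnj (snd p)"
proof -
  obtain a b where x: "x = (a, b)" by (cases x)
  have n: "a * cnj a + b * cnj b = 1" using assms by (simp add: mem_S3_iff x)
  have "frame_fst x p * cnj (frame_fst x p) + frame_snd x p * cnj (frame_snd x p)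
      = (a * cnj a + b * cnj b) * (fst p * cnj (fst p) + snd p * cnj (snd p))"
    by (simp add: frame_fst_def frame_snd_def x algebra_simps)
  then show ?thesis by (simp add: n)
qed

lemma frame_chart:
  assumes "x \<in> S3" and "u \<noteq> 0"
  shows "frame_fst x (chart x u w) = 1 - 1/u" and "frame_snd x (chart x u w) = w / u"
proof -
  obtain a b where x: "x = (a, b)" by (cases x)
  have n: "a * cnj a + b * cnj b = 1" using assms(1) by (simp add: mem_S3_iff x)
  have "frame_fst x (chart x u w) = (a * cnj a + b * cnj b) * (1 - 1/u)"
    using assms(2) by (simp add: frame_fst_def chart_def perp_def cscale_def x field_simps;
        simp add: algebra_simps)
  then show "frame_fst x (chart x u w) = 1 - 1/u" by (simp add: n)
  have "frame_snd x (chart x u w) = (a * cnj a + b * cnj b) * (w / u)"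
    using assms(2) by (simp add: frame_snd_def chart_def perp_def cscale_def x field_simps;
        simp add: algebra_simps)
  then show "frame_snd x (chart x u w) = w / u" by (simp add: n)
qed

lemma chart_level_nonzero:
  assumes "Re u = (1 + (cmod w)^2) / 2"
  shows "u \<noteq> 0"
proof
  assume "u = 0"
  with assms have "1 + (cmod w)^2 = 0" by simp
  then show False by (smt (verit) zero_le_power2)
qed

lemma chart_level_norm:
  assumes "Re u = (1 + (cmod w)^2) / 2"
  shows "(1 - 1/u) * cnj (1 - 1/u) + (w/u) * cnj (w/u) = 1"
proof -
  have u: "u \<noteq> 0" and cu: "cnj u \<noteq> 0" using chart_level_nonzero[OF assms] by auto
  have "u + cnj u = complex_of_real (1 + (cmod w)^2)"
    by (simp only: complex_add_cnj assms) simp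
  also have "\<dots> = 1 + w * cnj w" by (simp only: of_real_add complex_norm_square of_real_1)
  finally have "w * cnj w = u + cnj u - 1" by simp
  then show ?thesis using u cu by (simp add: field_simps; simp add: algebra_simps)
qed

lemma chart_in_S3:
  assumes "x \<in> S3" and "Re u = (1 + (cmod w)^2) / 2"
  shows "chart x u w \<in> S3"
  using frame_norm[OF assms(1), of "chart x u w"] chart_level_norm[OF assms(2)]
    frame_chart[OF assms(1) chart_level_nonzero[OF assms(2)]]
  by (simp add: mem_S3_iff)

lemma chart_surj:
  assumes x: "x \<in> S3" and p: "p \<in> S3" and "p \<noteq> x"
  obtains u w where "u \<noteq> 0" and "p = chart x u w"
proof -
  define a where "a = frame_fst x p"
  define b where "b = frame_snd x p"
  have p_eq: "p = cscale a x + cscale b (perp x)"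
    unfolding a_def b_def by (rule frame_reconstruct[OF x])
  have norm: "a * cnj a + b * cnj b = 1"
    using frame_norm[OF x, of p] p by (simp add: a_def b_def mem_S3_iff)
  have "a \<noteq> 1"
  proof
    assume "a = 1"
    with norm have "b = 0" by simp
    with \<open>a = 1\<close> p_eq \<open>p \<noteq> x\<close> show False by (simp add: cscale_def zero_prod_def)
  qed
  then have "1 - a \<noteq> 0" by simp
  then have "p = chart x (1 / (1 - a)) (b / (1 - a))"
    by (simp add: p_eq chart_def cscale_def prod_eq_iff field_simps; simp add: algebra_simps)
  with \<open>1 - a \<noteq> 0\<close> show ?thesis using that[of "1 / (1 - a)" "b / (1 - a)"] by simp
qed

lemma chart_ne_base:
  assumes "x \<in> S3" and "u \<noteq> 0"
  shows "chart x u w \<noteq> x"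
proof
  assume "chart x u w = x"
  moreover have "frame_fst x x = 1"
    using assms(1) by (cases x) (simp add: frame_fst_def mem_S3_iff mult.commute)
  ultimately show False using frame_chart(1)[OF assms, of w] assms(2) by simp
qed

lemma chart_inj:
  assumes "x \<in> S3" and "u \<noteq> 0" and "u' \<noteq> 0" and "chart x u w = chart x u' w'"
  shows "u = u'" and "w = w'"
proof -
  have "1 - 1/u = 1 - 1/u'"
    using frame_chart(1)[OF assms(1,2), of w] frame_chart(1)[OF assms(1,3), of w'] assms(4)
    by simp
  then show "u = u'" by simp
  have "w / u = w' / u'"
    using frame_chart(2)[OF assms(1,2), of w] frame_chart(2)[OF assms(1,3), of w'] assms(4)
    by simp
  with \<open>u = u'\<close> assms(2) show "w = w'" by simp
qed

lemma chart_same_slope: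
  assumes "u \<noteq> 0" and "u' \<noteq> 0"
  shows "chart x u w = x + cscale (u' / u) (chart x u' w - x)"
  using assms by (simp add: chart_def cscale_def prod_eq_iff field_simps)

text \<open>Since u (chart x u w - x) = w perp x - x is affine in (u, w), affine combinations of the
parameters give collinear chart points.\<close>

lemma chart_affine_combination:
  assumes "u1 \<noteq> 0" and "u2 \<noteq> 0" and "u \<noteq> 0"
    and "u = l * u1 + (1 - l) * u2" and "w = l * w1 + (1 - l) * w2"
  shows "chart x u w = chart x u1 w1 + cscale ((1 - l) * u2 / u) (chart x u2 w2 - chart x u1 w1)"
  using assms(1-3) unfolding chart_def cscale_def prod_eq_iff
  by (simp add: field_simps; simp add: assms(4,5) algebra_simps)

lemma chart_param_nonzero: "chart_param w h \<noteq> 0"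
  by (rule chart_level_nonzero) (simp add: chart_param_def)

lemma continuous_on_chart_cell: "continuous_on D (chart_cell x)"
proof -
  have "chart_cell x = (\<lambda>q. (fst x + (fst q * fst (perp x) - fst x) / chart_param (fst q) (snd q),
      snd x + (fst q * snd (perp x) - snd x) / chart_param (fst q) (snd q)))"
    by (simp add: fun_eq_iff chart_cell_def chart_def cscale_def prod_eq_iff)
  moreover have "continuous_on D (\<lambda>q. chart_param (fst q) (snd q))"
    unfolding chart_param_def by (intro continuous_intros) auto
  ultimately show ?thesis
    by (simp only:) (intro continuous_intros; simp add: chart_param_nonzero)
qed

lemma inj_chart_cell:
  assumes "x \<in> S3"
  shows "inj (chart_cell x)"
proof (rule injI)
  fix p q assume "chart_cell x p = chart_cell x q"
  then have "chart x (chart_param (fst p) (snd p)) (fst p)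
      = chart x (chart_param (fst q) (snd q)) (fst q)"
    by (simp add: chart_cell_def)
  note chart_inj[OF assms chart_param_nonzero chart_param_nonzero this]
  then show "p = q" by (simp add: chart_param_def prod_eq_iff)
qed

lemma linearly_closed_subset_S3: "linearly_closed A \<Longrightarrow> A \<subseteq> S3"
  by (simp add: linearly_closed_def)

lemma linearly_closedD:
  assumes "linearly_closed A" and "a \<in> A" and "b \<in> A" and "a \<noteq> b"
    and "p \<in> S3" and "p = a + cscale s (b - a)"
  shows "p \<in> A"
proof -
  have "p \<in> abstract_line_through a b"
    using assms(5,6) by (auto simp: abstract_line_through_def)
  then show ?thesis using assms(1-4) by (auto simp: linearly_closed_def)
qed

lemma mem_abstract_line_through:
  assumes "x \<in> S3" and "y \<in> S3"
  shows "x \<in> abstract_line_through x y" and "y \<in> abstract_line_through x y"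
proof -
  show "x \<in> abstract_line_through x y"
    using assms(1) unfolding abstract_line_through_def
    by (auto intro!: exI[of _ 0] simp: cscale_def zero_prod_def)
  show "y \<in> abstract_line_through x y"
    using assms(2) unfolding abstract_line_through_def
    by (auto intro!: exI[of _ 1] simp: cscale_def prod_eq_iff)
qed

lemma abstract_line_abstract_line_through:
  assumes "x \<in> S3" and "y \<in> S3" and "x \<noteq> y"
  shows "abstract_line (abstract_line_through x y)"
  unfolding abstract_line_def
proof (intro exI conjI)
  show "complex_affine_line {x + cscale t (y - x) | t. True}"
    unfolding complex_affine_line_def using assms(3) by (intro exI[of _ x] exI[of _ "y - x"]) auto
  show "abstract_line_through x y = {x + cscale t (y - x) | t. True} \<inter> S3"
    by (simp add: abstract_line_through_def)
qed (use mem_abstract_line_through[OF assms(1,2)] assms(3) in auto)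

lemma linearly_closed_point_off_line:
  assumes "linearly_closed A" and "\<not> abstract_line A"
    and "x \<in> A" and "y \<in> A" and "x \<noteq> y"
  obtains z where "z \<in> A" and "z \<notin> abstract_line_through x y"
proof -
  have "abstract_line (abstract_line_through x y)"
    using assms(3-5) linearly_closed_subset_S3[OF assms(1)]
    by (intro abstract_line_abstract_line_through) auto
  then have "A \<noteq> abstract_line_through x y" using assms(2) by auto
  moreover have "abstract_line_through x y \<subseteq> A"
    using assms(1,3-5) by (simp add: linearly_closed_def)
  ultimately show ?thesis using that by blast
qed

lemma linearly_closed_chart_fibre:
  assumes A: "linearly_closed A" and x: "x \<in> A" and "u \<noteq> 0" and P: "chart x u w \<in> A"
    and lev: "Re u' = (1 + (cmod w)^2) / 2"
  shows "chart x u' w \<in> A"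
proof (rule linearly_closedD[OF A x P])
  have "x \<in> S3" using A x linearly_closed_subset_S3 by blast
  show "x \<noteq> chart x u w" using chart_ne_base[OF \<open>x \<in> S3\<close> \<open>u \<noteq> 0\<close>] by (rule not_sym)
  show "chart x u' w \<in> S3" by (rule chart_in_S3[OF \<open>x \<in> S3\<close> lev])
  show "chart x u' w = x + cscale (u / u') (chart x u w - x)"
    by (rule chart_same_slope[OF chart_level_nonzero[OF lev] \<open>u \<noteq> 0\<close>])
qed

text \<open>A point of slope w is reached on the line through the point of slope w2 and a point of
slope w1 whose height Im u1 is tuned so that the combined parameter lands on the level of w; this is
possible exactly when the affine weight l of w with respect to w1, w2 is not real.\<close>

lemma linearly_closed_chart_spread:
  assumes A: "linearly_closed A" and x: "x \<in> A"
    and "u1 \<noteq> 0" and P1: "chart x u1 w1 \<in> A" and "u2 \<noteq> 0" and P2: "chart x u2 w2 \<in> A"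
    and "Im ((w - w2) / (w1 - w2)) \<noteq> 0" and "Re u = (1 + (cmod w)^2) / 2"
  shows "chart x u w \<in> A"
proof -
  have xS: "x \<in> S3" using A x linearly_closed_subset_S3 by blast
  define l where "l = (w - w2) / (w1 - w2)"
  have "Im l \<noteq> 0" using assms(7) by (simp add: l_def)
  then have "w1 \<noteq> w2" by (auto simp: l_def)
  then have wl: "w = l * w1 + (1 - l) * w2"
    by (simp add: l_def divide_simps) (simp add: algebra_simps)
  define h where "h = ((1 + (cmod w1)^2) / 2 * Re l + Re ((1 - l) * u2) - (1 + (cmod w)^2) / 2) / Im l"
  define u1' where "u1' = chart_param w1 h"
  define u' where "u' = l * u1' + (1 - l) * u2"
  have lev1: "Re u1' = (1 + (cmod w1)^2) / 2" by (simp add: u1'_def chart_param_def)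
  have lev: "Re u' = (1 + (cmod w)^2) / 2"
    using \<open>Im l \<noteq> 0\<close> by (simp add: u'_def u1'_def chart_param_def h_def field_simps)
  have Q1: "chart x u1' w1 \<in> A"
    by (rule linearly_closed_chart_fibre[OF A x \<open>u1 \<noteq> 0\<close> P1 lev1])
  have "chart x u1' w1 \<noteq> chart x u2 w2"
    using chart_inj(2)[OF xS chart_level_nonzero[OF lev1] \<open>u2 \<noteq> 0\<close>] \<open>w1 \<noteq> w2\<close> by blast
  then have "chart x u' w \<in> A"
    using linearly_closedD[OF A Q1 P2 _ chart_in_S3[OF xS lev]]
      chart_affine_combination[OF chart_level_nonzero[OF lev1] \<open>u2 \<noteq> 0\<close>
        chart_level_nonzero[OF lev] u'_def wl]
    by blast
  then show ?thesis
    by (rule linearly_closed_chart_fibre[OF A x chart_level_nonzero[OF lev] _ assms(8)])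
qed

lemma linearly_closed_contains_cell:
  assumes A: "linearly_closed A" and x: "x \<in> A" and "y \<in> A" and "x \<noteq> y"
    and "z \<in> A" and z: "z \<notin> abstract_line_through x y"
  obtains D :: "(complex \<times> real) set" where "open D" and "D \<noteq> {}" and "chart_cell x ` D \<subseteq> A"
proof -
  have S: "x \<in> S3" "y \<in> S3" "z \<in> S3"
    using assms(2,3,5) linearly_closed_subset_S3[OF A] by auto
  have "z \<noteq> x" using z mem_abstract_line_through(1)[OF S(1,2)] by auto
  obtain u1 w1 where "u1 \<noteq> 0" and y: "y = chart x u1 w1"
    using chart_surj[OF S(1,2)] \<open>x \<noteq> y\<close> by blast
  obtain u2 w2 where "u2 \<noteq> 0" and z_eq: "z = chart x u2 w2"
    using chart_surj[OF S(1,3)] \<open>z \<noteq> x\<close> by blast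
  have "w1 \<noteq> w2"
  proof
    assume "w1 = w2"
    then have "z = x + cscale (u1 / u2) (y - x)"
      using chart_same_slope[OF \<open>u2 \<noteq> 0\<close> \<open>u1 \<noteq> 0\<close>] y z_eq by simp
    then show False using z S(3) by (auto simp: abstract_line_through_def)
  qed
  define D where "D = {q :: complex \<times> real. 0 < Im ((fst q - w2) / (w1 - w2))}"
  show ?thesis
  proof
    show "open D" unfolding D_def
      by (rule open_Collect_less) (use \<open>w1 \<noteq> w2\<close> in \<open>intro continuous_intros; auto\<close>)+
    have "(w2 + \<i> * (w1 - w2), 0) \<in> D"
      using \<open>w1 \<noteq> w2\<close> by (simp add: D_def)
    then show "D \<noteq> {}" by blast
    show "chart_cell x ` D \<subseteq> A"
    proof (rule image_subsetI)
      fix q assume "q \<in> D"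
      then have "Im ((fst q - w2) / (w1 - w2)) \<noteq> 0" by (simp add: D_def)
      from linearly_closed_chart_spread[OF A x \<open>u1 \<noteq> 0\<close> _ \<open>u2 \<noteq> 0\<close> _ this]
      show "chart_cell x q \<in> A"
        using \<open>y \<in> A\<close> \<open>z \<in> A\<close> y z_eq by (simp add: chart_cell_def chart_param_def)
    qed
  qed
qed

lemma no_local_embedding_near_cell:
  fixes \<Phi> :: "'a::euclidean_space \<Rightarrow> 'b::topological_space" and f :: "'b \<Rightarrow> 'c::euclidean_space"
  assumes "open D" and "continuous_on D \<Phi>" and "inj_on \<Phi> D" and "\<Phi> ` D \<subseteq> A" and "p \<in> D"
    and "openin (top_of_set A) V" and "\<Phi> p \<in> V" and "V \<subseteq> N"
    and "continuous_on N f" and "inj_on f N"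
  shows "DIM('a) \<le> DIM('c)"
proof -
  obtain U where "open U" and V: "V = A \<inter> U" using assms(6) by (auto simp: openin_open)
  define D' where "D' = \<Phi> -` U \<inter> D"
  have "open D'"
    using assms(1,2) \<open>open U\<close> by (simp add: D'_def continuous_on_open_vimage)
  moreover have sub: "\<Phi> ` D' \<subseteq> N" using assms(4,8) V by (auto simp: D'_def)
  then have "continuous_on D' (f \<circ> \<Phi>)"
    by (intro continuous_on_compose continuous_on_subset[OF assms(2)]
        continuous_on_subset[OF assms(9)]) (auto simp: D'_def)
  moreover have "inj_on (f \<circ> \<Phi>) D'"
    by (rule comp_inj_on[OF inj_on_subset[OF assms(3)] inj_on_subset[OF assms(10) sub]])
      (auto simp: D'_def)
  moreover have "D' \<noteq> {}" using assms(5,7) V by (auto simp: D'_def)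
  ultimately show ?thesis using invariance_of_dimension by blast
qed

theorem lemma3p5:
  fixes A :: "(complex \<times> complex) set"
  assumes "A \<noteq> {}" and "linearly_closed A"
    and "\<not> (\<exists>x. A = {x})" and "\<not> abstract_line A"
  shows "\<exists>x\<in>A. \<forall>N. (N \<subseteq> A \<and> (\<exists>V. openin (top_of_set A) V \<and> x \<in> V \<and> V \<subseteq> N)) \<longrightarrow>
           \<not> (\<exists>f :: complex \<times> complex \<Rightarrow> complex. continuous_on N f \<and> inj_on f N)"
proof -
  obtain x y where "x \<in> A" "y \<in> A" "x \<noteq> y" using assms(1,3) by blast
  moreover obtain z where "z \<in> A" "z \<notin> abstract_line_through x y"
    using linearly_closed_point_off_line assms(2,4) calculation by metis
  ultimately obtain D where D: "open D" "D \<noteq> {}" "chart_cell x ` D \<subseteq> A"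
    using linearly_closed_contains_cell assms(2) by metis
  then obtain p where "p \<in> D" by blast
  have inj: "inj_on (chart_cell x) D"
    using inj_chart_cell \<open>x \<in> A\<close> assms(2) linearly_closed_subset_S3 by (blast intro: inj_on_subset)
  show ?thesis
  proof (intro bexI allI impI notI)
    fix N assume "N \<subseteq> A \<and> (\<exists>V. openin (top_of_set A) V \<and> chart_cell x p \<in> V \<and> V \<subseteq> N)"
      and "\<exists>f :: complex \<times> complex \<Rightarrow> complex. continuous_on N f \<and> inj_on f N"
    then have "DIM(complex \<times> real) \<le> DIM(complex)"
      using no_local_embedding_near_cell[OF D(1) continuous_on_chart_cell inj D(3) \<open>p \<in> D\<close>]
      by blast
    then show False by simp
  qed (use D(3) \<open>p \<in> D\<close> in blast)
qed

end
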